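(* For every graph $H$ on the $7$ vertices of $K_7$ with $|E(H)|\le4$, we have $q(K_7\setminus H)=2$.
   Context: $K_n\setminus H$ denotes the graph obtained from the complete graph $K_n$ by deleting the edges of $H$, where $H$ is a graph on the same $n$ vertices. For a graph $G$ on $n$ vertices, $S(G)$ is the set of real symmetric $n\times n$ matrices $A$ with $a_{ij}\ne0$ ($i\ne j$) iff $ij\in E(G)$, diagonal unrestricted, and $q(G)$ is the minimum number of distinct eigenvalues of a matrix in $S(G)$. *)

theory Defs
  imports "HOL-Analysis.Analysis"
begin

text \<open>A simple graph on the vertex type 'n is given by its edge set: a set of
  2-element subsets of the vertex set.\<close>

definition simple_edges :: "('n set) set" where
  "simple_edges = {{i, j} | i j. i \<noteq> j}"

definition complete_minus :: "('n set) set \<Rightarrow> ('n set) set" where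
  "complete_minus H = simple_edges - H"

definition S_graph :: "('n::finite set) set \<Rightarrow> (real^'n^'n) set" where
  "S_graph E = {A. transpose A = A \<and>
      (\<forall>i j. i \<noteq> j \<longrightarrow> (A $ i $ j \<noteq> 0 \<longleftrightarrow> {i, j} \<in> E))}"

definition eigenvalues :: "real^'n^'n \<Rightarrow> real set" where
  "eigenvalues A = {c. \<exists>v. v \<noteq> 0 \<and> A *v v = c *\<^sub>R v}"

definition q_graph :: "('n::finite set) set \<Rightarrow> nat" where
  "q_graph E = (LEAST k. \<exists>A \<in> S_graph E. card (eigenvalues A) = k)"

end

(* The lower bound q >= 2 holds as soon as the graph has an edge: a real symmetric matrix
   with a nonzero off-diagonal entry is not a multiple of the identity, so its largest and
   smallest Rayleigh quotients are two distinct eigenvalues.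

   For the upper bound, let U be a real 7 x k matrix whose columns are orthogonal and of
   squared length c with respect to positive weights w, and let D = diag (sqrt w).  Then
   A = D U U^T D satisfies A^2 = c A, so its spectrum is {0, c}, and A_ij = 0 exactly when
   the rows u_i and u_j of U are orthogonal.  Relabelling the vertices permutes A without
   changing its spectrum, so it suffices to give U and w for one representative of each of
   the 19 isomorphism classes of graphs with at most four edges on seven vertices.  That
   every such H is a relabelled representative is seen by adding its edges one at a time:
   a new edge either lies among the vertices already used, or a transposition fixing these
   moves it onto an edge at one or two designated fresh vertices. *)

theory Submission
  imports Defs
begin

lemma inner_matrix_vector_symmetric:
  fixes A :: "real^'n^'n"
  assumes "transpose A = A"
  shows "x \<bullet> (A *v y) = (A *v x) \<bullet> y"
  by (metis assms dot_lmul_matrix transpose_matrix_vector)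

lemma eigenvector_of_quadratic_form_maximizer:
  fixes A :: "real^'n^'n"
  assumes sym: "transpose A = A"
    and bound: "\<And>y. y \<bullet> (A *v y) \<le> l * (y \<bullet> y)"
    and attained: "x \<bullet> (A *v x) = l * (x \<bullet> x)"
  shows "A *v x = l *\<^sub>R x"
proof -
  define Q where "Q y = l * (y \<bullet> y) - y \<bullet> (A *v y)" for y
  define d where "d = l *\<^sub>R x - A *v x"
  have Q_nonneg: "Q y \<ge> 0" for y
    using bound[of y] by (simp add: Q_def)
  have Q_along_d: "Q (x - t *\<^sub>R d) = t\<^sup>2 * Q d - 2 * t * (d \<bullet> d)" for t
  proof -
    have "x \<bullet> (A *v d) = (A *v x) \<bullet> d"
      by (rule inner_matrix_vector_symmetric[OF sym])
    then have "Q (x - t *\<^sub>R d) = Q x + t\<^sup>2 * Q d - 2 * t * (l * (x \<bullet> d) - (A *v x) \<bullet> d)"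
      unfolding Q_def
      by (simp add: inner_commute algebra_simps power2_eq_square)
    also have "l * (x \<bullet> d) - (A *v x) \<bullet> d = d \<bullet> d"
      by (simp add: d_def inner_diff_left inner_commute)
    finally show ?thesis
      using attained by (simp add: Q_def)
  qed
  have "d \<bullet> d = 0"
  proof (rule ccontr)
    assume "d \<bullet> d \<noteq> 0"
    then have s: "d \<bullet> d > 0" by simp
    define t where "t = (d \<bullet> d) / (Q d + 1)"
    have "t > 0" "t * Q d < d \<bullet> d"
      using s Q_nonneg[of d] by (simp_all add: t_def field_simps)
    then have "t\<^sup>2 * Q d - 2 * t * (d \<bullet> d) < 0"
      by (simp add: power2_eq_square algebra_simps) (use s in linarith)
    then show False
      using Q_nonneg[of "x - t *\<^sub>R d"] Q_along_d[of t] by simp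
  qed
  then show ?thesis
    by (simp add: d_def)
qed

lemma symmetric_max_eigenvalue:
  fixes A :: "real^'n^'n"
  assumes sym: "transpose A = A"
  shows "\<exists>l x. x \<noteq> 0 \<and> A *v x = l *\<^sub>R x \<and> (\<forall>y. y \<bullet> (A *v y) \<le> l * (y \<bullet> y))"
proof -
  let ?f = "\<lambda>x. x \<bullet> (A *v x)"
  have "continuous_on (sphere 0 1) ?f"
    by (intro continuous_intros linear_continuous_on linear_linear[THEN iffD1] matrix_vector_mul_linear)
  moreover have "sphere (0::real^'n) 1 \<noteq> {}"
    by simp
  ultimately obtain x where x: "x \<in> sphere 0 1" and max: "\<And>y. y \<in> sphere 0 1 \<Longrightarrow> ?f y \<le> ?f x"
    using continuous_attains_sup[OF compact_sphere] by blast
  define l where "l = ?f x"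
  have unit: "x \<bullet> x = 1"
    using x by (simp add: dot_square_norm)
  have bound: "y \<bullet> (A *v y) \<le> l * (y \<bullet> y)" for y
  proof (cases "y = 0")
    case False
    have "?f ((1 / norm y) *\<^sub>R y) \<le> l"
      using False max[of "(1 / norm y) *\<^sub>R y"] by (simp add: l_def)
    then show ?thesis
      using False by (simp add: matrix_vector_mult_scaleR dot_square_norm field_simps power2_eq_square)
  qed simp
  have "A *v x = l *\<^sub>R x"
    by (rule eigenvector_of_quadratic_form_maximizer[OF sym bound]) (simp add: l_def unit)
  moreover have "x \<noteq> 0"
    using unit by auto
  ultimately show ?thesis
    using bound by blast
qed

lemma finite_eigenvalues_symmetric:
  fixes A :: "real^'n^'n"
  assumes sym: "transpose A = A"
  shows "finite (eigenvalues A)"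
proof -
  define v where "v c = (SOME x. x \<noteq> 0 \<and> A *v x = c *\<^sub>R x)" for c
  have v: "v c \<noteq> 0 \<and> A *v v c = c *\<^sub>R v c" if "c \<in> eigenvalues A" for c
    using that unfolding eigenvalues_def v_def by (metis (mono_tags, lifting) mem_Collect_eq)
  have orth: "v c \<bullet> v d = 0" if "c \<in> eigenvalues A" "d \<in> eigenvalues A" "c \<noteq> d" for c d
  proof -
    have "c * (v c \<bullet> v d) = v c \<bullet> (A *v v d)"
      using v[OF that(1)] inner_matrix_vector_symmetric[OF sym, of "v c" "v d"] by simp
    also have "\<dots> = d * (v c \<bullet> v d)"
      using v[OF that(2)] by simp
    finally show ?thesis
      using that(3) by simp
  qed
  have "inj_on v (eigenvalues A)"
    by (rule inj_onI) (metis orth v inner_eq_zero_iff)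
  moreover have "finite (v ` eigenvalues A)"
    by (rule pairwise_orthogonal_imp_finite) (auto simp: pairwise_def orthogonal_def intro: orth)
  ultimately show ?thesis
    using finite_imageD by blast
qed

lemma card_eigenvalues_ge_2:
  fixes A :: "real^'n^'n"
  assumes sym: "transpose A = A" and "i \<noteq> j" "A $ i $ j \<noteq> 0"
  shows "2 \<le> card (eigenvalues A)"
proof -
  obtain l x where x: "x \<noteq> 0" "A *v x = l *\<^sub>R x" and max: "\<And>y. y \<bullet> (A *v y) \<le> l * (y \<bullet> y)"
    using symmetric_max_eigenvalue[OF sym] by blast
  have neg_mv: "(- A) *v y = - (A *v y)" for y
    by (simp add: matrix_vector_mult_def vec_eq_iff sum_negf)
  have "transpose (- A) = - A"
    using sym by (simp add: transpose_def vec_eq_iff)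
  then obtain m z where z: "z \<noteq> 0" "(- A) *v z = m *\<^sub>R z" and min: "\<And>y. y \<bullet> ((- A) *v y) \<le> m * (y \<bullet> y)"
    using symmetric_max_eigenvalue[of "- A"] by blast
  have "A *v z = (- m) *\<^sub>R z"
    using z(2) unfolding neg_mv by (simp add: minus_equation_iff[of "A *v z"])
  then have eigs: "{l, - m} \<subseteq> eigenvalues A"
    using x z(1) unfolding eigenvalues_def by blast
  have "l \<noteq> - m"
  proof
    assume "l = - m"
    then have form: "y \<bullet> (A *v y) = l * (y \<bullet> y)" for y
      using max[of y] min[of y] by (simp add: neg_mv)
    let ?e = "\<lambda>k. axis k (1::real)"
    have entry: "?e k \<bullet> (A *v ?e k') = A $ k $ k'" for k k'
      by (simp add: matrix_vector_mult_basis inner_axis' column_def)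
    have "A $ j $ i = A $ i $ j"
      using arg_cong[OF sym, of "\<lambda>M. M $ i $ j"] by (simp add: transpose_def)
    moreover have "A $ i $ i = l" "A $ j $ j = l"
      using form[of "?e i"] form[of "?e j"] by (simp_all add: entry inner_axis_axis)
    moreover have "(?e i + ?e j) \<bullet> (A *v (?e i + ?e j)) = A $ i $ i + A $ i $ j + A $ j $ i + A $ j $ j"
      by (simp add: matrix_vector_right_distrib inner_add_left inner_add_right entry)
    ultimately have "2 * A $ i $ j = 0"
      using form[of "?e i + ?e j"] \<open>i \<noteq> j\<close> by (simp add: inner_add_left inner_add_right inner_axis_axis)
    then show False
      using \<open>A $ i $ j \<noteq> 0\<close> by simp
  qed
  then show ?thesis
    using card_mono[OF finite_eigenvalues_symmetric[OF sym] eigs] by simp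
qed

lemma eigenvalues_of_square_eq_scaled:
  fixes A :: "real^'n^'n"
  assumes sq: "A ** A = c *\<^sub>R A" and "c \<noteq> 0" and "i \<noteq> j" "A $ i $ j \<noteq> 0"
  shows "eigenvalues A = {0, c}"
proof
  show "eigenvalues A \<subseteq> {0, c}"
  proof
    fix l assume "l \<in> eigenvalues A"
    then obtain v where v: "v \<noteq> 0" "A *v v = l *\<^sub>R v"
      unfolding eigenvalues_def by blast
    have "(l * l) *\<^sub>R v = A *v (A *v v)"
      using v(2) by (simp add: matrix_vector_mult_scaleR)
    also have "\<dots> = (A ** A) *v v"
      by (rule matrix_vector_mul_assoc)
    also have "\<dots> = (c * l) *\<^sub>R v"
      using v(2) by (simp add: sq scaleR_matrix_vector_assoc[symmetric])
    finally have "l * l = c * l"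
      using v(1) by (simp add: scaleR_cancel_right)
    then show "l \<in> {0, c}"
      by auto
  qed
next
  let ?col = "A *v axis j 1"
  have col_eigen: "A *v ?col = c *\<^sub>R ?col"
    by (simp add: matrix_vector_mul_assoc sq scaleR_matrix_vector_assoc[symmetric])
  have col_i: "?col $ i = A $ i $ j"
    by (simp add: matrix_vector_mult_basis column_def)
  have "?col \<noteq> 0"
    using col_i assms(4) by auto
  then have "c \<in> eigenvalues A"
    using col_eigen unfolding eigenvalues_def by blast
  moreover have "A *v (?col - c *\<^sub>R axis j 1) = 0 *\<^sub>R (?col - c *\<^sub>R axis j 1)"
    by (simp add: matrix_vector_mult_diff_distrib matrix_vector_mult_scaleR col_eigen)
  moreover have "(?col - c *\<^sub>R axis j 1) $ i \<noteq> 0"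
    using col_i assms(3,4) by (simp add: axis_def)
  then have "?col - c *\<^sub>R axis j 1 \<noteq> 0"
    by auto
  ultimately show "{0, c} \<subseteq> eigenvalues A"
    unfolding eigenvalues_def by blast
qed

lemma eigenvalues_subset_reindex:
  fixes A :: "real^'n^'n" and p :: "'n \<Rightarrow> 'n"
  assumes p: "bij p"
  shows "eigenvalues A \<subseteq> eigenvalues (\<chi> i j. A $ p i $ p j)"
proof
  fix c assume "c \<in> eigenvalues A"
  then obtain v where v: "v \<noteq> 0" "A *v v = c *\<^sub>R v"
    unfolding eigenvalues_def by blast
  define v' :: "real^'n" where "v' = (\<chi> i. v $ p i)"
  have "((\<chi> i j. A $ p i $ p j) *v v') $ i = c * v' $ i" for i
  proof -
    have "((\<chi> i j. A $ p i $ p j) *v v') $ i = (\<Sum>k\<in>UNIV. A $ p i $ p k * v $ p k)"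
      by (simp add: matrix_vector_mult_def v'_def)
    also have "\<dots> = (\<Sum>k\<in>UNIV. A $ p i $ k * v $ k)"
      using sum.reindex_bij_betw[of p UNIV UNIV "\<lambda>k. A $ p i $ k * v $ k"] p by (simp add: bij_def)
    also have "\<dots> = (A *v v) $ p i"
      by (simp add: matrix_vector_mult_def)
    finally show ?thesis
      using v(2) by (simp add: v'_def)
  qed
  moreover have "v' \<noteq> 0"
  proof
    assume "v' = 0"
    then have "v $ p k = 0" for k
      by (metis v'_def vec_lambda_beta zero_index)
    then have "v = 0"
      using p by (metis bij_pointE vec_eq_iff zero_index)
    then show False
      using v(1) by simp
  qed
  ultimately show "c \<in> eigenvalues (\<chi> i j. A $ p i $ p j)"
    unfolding eigenvalues_def by (auto simp: vec_eq_iff)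
qed

lemma eigenvalues_reindex:
  fixes A :: "real^'n^'n" and p :: "'n \<Rightarrow> 'n"
  assumes p: "bij p"
  shows "eigenvalues (\<chi> i j. A $ p i $ p j) = eigenvalues A"
proof
  have "(\<chi> i j. (\<chi> i j. A $ p i $ p j) $ inv p i $ inv p j) = A"
    using p by (simp add: vec_eq_iff bij_is_surj surj_f_inv_f)
  then show "eigenvalues (\<chi> i j. A $ p i $ p j) \<subseteq> eigenvalues A"
    using eigenvalues_subset_reindex[OF bij_imp_bij_inv[OF p], of "\<chi> i j. A $ p i $ p j"] by simp
qed (rule eigenvalues_subset_reindex[OF p])

lemma doubleton_in_simple_edges_iff [simp]: "{i, j} \<in> simple_edges \<longleftrightarrow> i \<noteq> j"
  by (auto simp: simple_edges_def doubleton_eq_iff)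

lemma S_graph_complete_minus_iff:
  "A \<in> S_graph (complete_minus H) \<longleftrightarrow>
    transpose A = A \<and> (\<forall>i j. i \<noteq> j \<longrightarrow> (A $ i $ j \<noteq> 0 \<longleftrightarrow> {i, j} \<notin> H))"
  by (auto simp: S_graph_def complete_minus_def)

lemma q_graph_eq_2I:
  assumes "i \<noteq> j" "{i, j} \<in> G" and "A \<in> S_graph G" "card (eigenvalues A) = 2"
  shows "q_graph G = 2"
  unfolding q_graph_def
proof (rule Least_equality)
  show "\<exists>A\<in>S_graph G. card (eigenvalues A) = 2"
    using assms(3,4) by blast
next
  fix k assume "\<exists>B\<in>S_graph G. card (eigenvalues B) = k"
  then obtain B where "B \<in> S_graph G" "card (eigenvalues B) = k"
    by blast
  then show "2 \<le> k"
    using card_eigenvalues_ge_2[of B i j] assms(1,2) by (auto simp: S_graph_def)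
qed

lemma exists_non_neighbour:
  fixes H :: "'n::finite set set"
  assumes "card H + 1 < CARD('n)"
  shows "\<exists>j. j \<noteq> i \<and> {i, j} \<notin> H"
proof (rule ccontr)
  assume "\<nexists>j. j \<noteq> i \<and> {i, j} \<notin> H"
  then have star: "(\<lambda>j. {i, j}) ` (UNIV - {i}) \<subseteq> H"
    by blast
  have "inj_on (\<lambda>j. {i, j}) (UNIV - {i})"
    by (rule inj_onI) (auto simp: doubleton_eq_iff)
  then have "card (UNIV - {i}) \<le> card H"
    by (rule card_inj_on_le[OF _ star]) simp
  then show False
    using assms by (simp add: card_Diff_singleton)
qed

definition two_eigenvalue_realizable :: "'n::finite set set \<Rightarrow> bool" where
  "two_eigenvalue_realizable H \<longleftrightarrow> (\<exists>A\<in>S_graph (complete_minus H). card (eigenvalues A) = 2)"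

lemma two_eigenvalue_realizable_of_weighted_rows:
  fixes u :: "'n::finite \<Rightarrow> real^'k" and w :: "'n \<Rightarrow> real"
  assumes w: "\<forall>i. 0 < w i" and "c \<noteq> 0"
    and orth: "\<forall>a b. (\<Sum>i\<in>UNIV. w i * u i $ a * u i $ b) = (if a = b then c else 0)"
    and pattern: "\<forall>i j. i \<noteq> j \<longrightarrow> (u i \<bullet> u j \<noteq> 0 \<longleftrightarrow> {i, j} \<notin> H)"
    and "i \<noteq> j" "{i, j} \<notin> H"
  shows "two_eigenvalue_realizable H"
proof -
  define V :: "real^'k^'n" where "V = (\<chi> i. sqrt (w i) *\<^sub>R u i)"
  define A where "A = V ** transpose V"
  have sqrt_w: "sqrt (w i) * (sqrt (w i) * z) = w i * z" for i z
    using w by (simp add: less_imp_le mult.assoc[symmetric])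
  have entry: "A $ i $ j = sqrt (w i) * sqrt (w j) * (u i \<bullet> u j)" for i j
    by (simp add: A_def V_def matrix_matrix_mult_def transpose_def inner_vec_def sum_distrib_left mult_ac)
  have entry_nonzero_iff: "A $ i $ j \<noteq> 0 \<longleftrightarrow> u i \<bullet> u j \<noteq> 0" for i j
    using w by (simp add: entry less_imp_neq[symmetric])
  have gram: "transpose V ** V = c *\<^sub>R mat 1"
    using orth by (simp add: V_def matrix_matrix_mult_def transpose_def mat_def vec_eq_iff sqrt_w mult_ac)
  have "A ** A = V ** ((transpose V ** V) ** transpose V)"
    by (simp add: A_def matrix_mul_assoc)
  also have "\<dots> = c *\<^sub>R A"
    by (simp add: gram A_def matrix_scalar_ac scalar_matrix_assoc[symmetric])
  finally have "A ** A = c *\<^sub>R A" .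
  moreover have "A $ i $ j \<noteq> 0"
    using pattern assms(5,6) entry_nonzero_iff by blast
  ultimately have "eigenvalues A = {0, c}"
    using eigenvalues_of_square_eq_scaled \<open>c \<noteq> 0\<close> \<open>i \<noteq> j\<close> by blast
  moreover have "transpose A = A"
    by (simp add: A_def matrix_transpose_mul)
  then have "A \<in> S_graph (complete_minus H)"
    unfolding S_graph_complete_minus_iff using pattern entry_nonzero_iff by blast
  ultimately show ?thesis
    using \<open>c \<noteq> 0\<close> unfolding two_eigenvalue_realizable_def by (intro bexI[of _ A]) auto
qed

definition relabeling_invariant :: "('a set set \<Rightarrow> bool) \<Rightarrow> bool" where
  "relabeling_invariant P \<longleftrightarrow> (\<forall>p H. bij p \<longrightarrow> P H \<longrightarrow> P ((`) p ` H))"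

lemma relabeling_invariantD: "relabeling_invariant P \<Longrightarrow> bij p \<Longrightarrow> P H \<Longrightarrow> P ((`) p ` H)"
  by (simp add: relabeling_invariant_def)

lemma relabeling_invariant_two_eigenvalue_realizable:
  "relabeling_invariant (two_eigenvalue_realizable :: 'n::finite set set \<Rightarrow> bool)"
  unfolding relabeling_invariant_def
proof (intro allI impI)
  fix p :: "'n \<Rightarrow> 'n" and H :: "'n set set"
  assume p: "bij p" and "two_eigenvalue_realizable H"
  then obtain A where "A \<in> S_graph (complete_minus H)" and eig: "card (eigenvalues A) = 2"
    unfolding two_eigenvalue_realizable_def by blast
  then have A: "transpose A = A" "\<And>i j. i \<noteq> j \<Longrightarrow> A $ i $ j \<noteq> 0 \<longleftrightarrow> {i, j} \<notin> H"
    unfolding S_graph_complete_minus_iff by blast+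
  define q where "q = inv p"
  have q: "bij q" "\<And>i. p (q i) = i"
    using p by (simp_all add: q_def bij_imp_bij_inv bij_is_surj surj_f_inv_f)
  define B where "B = (\<chi> i j. A $ q i $ q j)"
  have "transpose B = B"
    using A(1) by (simp add: B_def transpose_def vec_eq_iff)
  moreover have "B $ i $ j \<noteq> 0 \<longleftrightarrow> {i, j} \<notin> (`) p ` H" if "i \<noteq> j" for i j
  proof -
    have "q i \<noteq> q j"
      using that q(2) by metis
    then have "B $ i $ j \<noteq> 0 \<longleftrightarrow> {q i, q j} \<notin> H"
      using A(2)[of "q i" "q j"] by (simp add: B_def)
    moreover have "p ` {q i, q j} = {i, j}"
      by (simp add: q(2))
    moreover have "inj ((`) p)"
      using bij_is_inj[OF p] by (simp add: inj_def inj_image_eq_iff)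
    then have "p ` {q i, q j} \<in> (`) p ` H \<longleftrightarrow> {q i, q j} \<in> H"
      by (rule inj_image_mem_iff)
    ultimately show ?thesis
      by simp
  qed
  moreover have "card (eigenvalues B) = 2"
    using eig eigenvalues_reindex[OF q(1)] by (simp add: B_def)
  ultimately have "B \<in> S_graph (complete_minus ((`) p ` H)) \<and> card (eigenvalues B) = 2"
    unfolding S_graph_complete_minus_iff by blast
  then show "two_eigenvalue_realizable ((`) p ` H)"
    unfolding two_eigenvalue_realizable_def by blast
qed

fun swaps :: "('a \<times> 'a) list \<Rightarrow> 'a \<Rightarrow> 'a" where
  "swaps [] = id"
| "swaps ((a, b) # ps) = Transposition.transpose a b \<circ> swaps ps"

lemma bij_swaps: "bij (swaps ps)"
  by (induction ps rule: swaps.induct) (simp_all only: swaps.simps bij_id bij_comp bij_transpose)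

lemma relabel_swaps: "relabeling_invariant Q \<Longrightarrow> Q H \<Longrightarrow> Q ((`) (swaps ps) ` H)"
  by (rule relabeling_invariantD[OF _ bij_swaps])

definition extensions_satisfy :: "('a set set \<Rightarrow> bool) \<Rightarrow> nat \<Rightarrow> 'a set set \<Rightarrow> bool" where
  "extensions_satisfy P k K \<longleftrightarrow>
    (\<forall>H. H \<subseteq> (simple_edges :: 'a set set) \<longrightarrow> finite H \<longrightarrow> card H \<le> k \<longrightarrow> P (K \<union> H))"

lemma image_in_simple_edges:
  assumes "inj p" "e \<in> simple_edges"
  shows "p ` e \<in> simple_edges"
proof -
  obtain i j where "e = {i, j}" "i \<noteq> j"
    using assms(2) by (auto simp: simple_edges_def)
  then show ?thesis
    using assms(1) by (simp add: inj_eq)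
qed

lemma extensions_satisfy_0_iff [simp]: "extensions_satisfy P 0 K \<longleftrightarrow> P K"
  unfolding extensions_satisfy_def
  by (metis card_0_eq empty_subsetI finite.emptyI le_zero_eq sup_bot.right_neutral)

lemma extensions_satisfy_step:
  assumes "0 < k" "P K"
    and step: "\<And>e. e \<in> simple_edges \<Longrightarrow> e \<notin> K \<Longrightarrow> extensions_satisfy P (k - 1) (insert e K)"
  shows "extensions_satisfy P k K"
  unfolding extensions_satisfy_def
proof (intro allI impI)
  fix H :: "'a set set"
  assume H: "H \<subseteq> simple_edges" "finite H" "card H \<le> k"
  show "P (K \<union> H)"
  proof (cases "H \<subseteq> K")
    case True
    then show ?thesis
      using \<open>P K\<close> by (simp add: sup.absorb1)
  next
    case False
    then obtain e where e: "e \<in> H" "e \<notin> K"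
      by blast
    have "card (H - {e}) \<le> k - 1"
      using H e by (simp add: card_Diff_singleton diff_le_mono)
    then have "P (insert e K \<union> (H - {e}))"
      using step[of e] H e unfolding extensions_satisfy_def by blast
    moreover have "insert e K \<union> (H - {e}) = K \<union> H"
      using e by blast
    ultimately show ?thesis
      by simp
  qed
qed

lemma relabeling_invariant_extensions_satisfy:
  assumes "relabeling_invariant P"
  shows "relabeling_invariant (extensions_satisfy P k)"
  unfolding relabeling_invariant_def extensions_satisfy_def
proof (intro allI impI)
  fix p :: "'a \<Rightarrow> 'a" and K H :: "'a set set"
  assume p: "bij p" and K: "\<forall>H. H \<subseteq> simple_edges \<longrightarrow> finite H \<longrightarrow> card H \<le> k \<longrightarrow> P (K \<union> H)"
    and H: "H \<subseteq> simple_edges" "finite H" "card H \<le> k"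
  define H' where "H' = (`) (inv p) ` H"
  have "H' \<subseteq> simple_edges"
    using H(1) p by (auto simp: H'_def bij_imp_bij_inv bij_is_inj intro: image_in_simple_edges)
  moreover have "card H' \<le> k"
    using H(2,3) card_image_le order_trans unfolding H'_def by blast
  ultimately have "P (K \<union> H')"
    using K H(2) by (simp add: H'_def)
  then have "P ((`) p ` (K \<union> H'))"
    by (rule relabeling_invariantD[OF assms p])
  moreover have "(`) p ` H' = H"
    using p by (simp add: H'_def image_image bij_is_surj surj_f_inv_f)
  ultimately show "P ((`) p ` K \<union> H)"
    by (simp add: image_Un)
qed

lemma relabel_transpose_insert:
  assumes "relabeling_invariant Q" "\<Union>K \<subseteq> V" "a \<notin> V" "b \<notin> V" "Q (insert e K)"
  shows "Q (insert (Transposition.transpose a b ` e) K)"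
proof -
  have "Transposition.transpose a b ` f = f" if "f \<in> K" for f
  proof -
    have "Transposition.transpose a b v = v" if "v \<in> f" for v
    proof -
      have "v \<in> V"
        using \<open>f \<in> K\<close> that assms(2) by blast
      then show ?thesis
        using assms(3,4) by (metis transpose_apply_other)
    qed
    then show ?thesis
      by (metis (no_types, lifting) image_cong image_ident)
  qed
  then have "(`) (Transposition.transpose a b) ` K = K"
    by simp
  moreover have "Q ((`) (Transposition.transpose a b) ` insert e K)"
    by (rule relabeling_invariantD[OF assms(1) bij_transpose assms(5)])
  ultimately show ?thesis
    by simp
qed

lemma fresh_edge_relabel:
  assumes inv: "relabeling_invariant Q" and K: "\<Union>K \<subseteq> V"
    and "x \<notin> V" "y \<notin> V" "x \<noteq> y" "Q (insert {x, y} K)"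
    and "a \<notin> V" "b \<notin> V" "a \<noteq> b"
  shows "Q (insert {a, b} K)"
proof -
  have *: "Q (insert {a, b} K)" if "a \<notin> V" "b \<notin> V" "a \<noteq> b" "b \<noteq> x" for a b
  proof -
    have "Q (insert (Transposition.transpose y b ` {x, y}) K)"
      using relabel_transpose_insert[OF inv K] assms that by blast
    then have "Q (insert {x, b} K)"
      using assms that by (simp add: insert_commute)
    then have "Q (insert (Transposition.transpose x a ` {x, b}) K)"
      using relabel_transpose_insert[OF inv K] assms that by blast
    then show ?thesis
      using that by simp
  qed
  show ?thesis
  proof (cases "b = x")
    case True
    then show ?thesis
      using *[of b a] assms by (simp add: insert_commute)
  qed (use * assms in blast)
qed

(* An edge leaving V is moved by a transposition fixing V onto an edge at the fresh vertex x,
   so only the edges inside insert x V and those between two fresh vertices need checking. *)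
lemma extensions_satisfy_step_fresh:
  assumes inv: "relabeling_invariant P" and "0 < k" "P K" and K: "\<Union>K \<subseteq> V" and x: "x \<notin> V"
    and inner: "\<forall>a\<in>insert x V. \<forall>b\<in>V. a \<noteq> b \<longrightarrow> {a, b} \<notin> K \<longrightarrow>
      extensions_satisfy P (k - 1) (insert {a, b} K)"
    and outer: "\<And>a b. a \<notin> V \<Longrightarrow> b \<notin> V \<Longrightarrow> a \<noteq> b \<Longrightarrow>
      extensions_satisfy P (k - 1) (insert {a, b} K)"
  shows "extensions_satisfy P k K"
proof (rule extensions_satisfy_step[of k P K, OF \<open>0 < k\<close> \<open>P K\<close>])
  have inv': "relabeling_invariant (extensions_satisfy P (k - 1))"
    by (rule relabeling_invariant_extensions_satisfy[OF inv])
  have one_fresh: "extensions_satisfy P (k - 1) (insert {a, b} K)" if "a \<in> V" "b \<notin> V" for a b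
  proof -
    have "{x, a} \<notin> K"
      using K x by blast
    then have "extensions_satisfy P (k - 1) (insert {x, a} K)"
      using that x by (intro inner[rule_format]) auto
    then have "extensions_satisfy P (k - 1) (insert (Transposition.transpose x b ` {x, a}) K)"
      using relabel_transpose_insert[OF inv' K] that x by blast
    moreover have "Transposition.transpose x b a = a"
      using that x by (metis transpose_apply_other)
    ultimately show ?thesis
      by (simp add: insert_commute)
  qed
  fix e assume "e \<in> simple_edges" "e \<notin> K"
  then obtain a b where e: "e = {a, b}" "a \<noteq> b" "{a, b} \<notin> K"
    by (auto simp: simple_edges_def)
  consider "a \<in> V" "b \<in> V" | "a \<in> V" "b \<notin> V" | "a \<notin> V" "b \<in> V" | "a \<notin> V" "b \<notin> V"
    by blast
  then show "extensions_satisfy P (k - 1) (insert e K)"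
  proof cases
    case 1
    then show ?thesis
      using inner[rule_format, of a b] e by simp
  next
    case 2
    then show ?thesis
      using one_fresh e by blast
  next
    case 3
    then show ?thesis
      using one_fresh[of b a] e by (simp add: insert_commute)
  next
    case 4
    then show ?thesis
      using outer e by blast
  qed
qed

lemma extensions_satisfy_step_fresh_pair:
  assumes inv: "relabeling_invariant P" and "0 < k" "P K" and K: "\<Union>K \<subseteq> V"
    and fresh: "x \<notin> V" "y \<notin> V" "x \<noteq> y"
    and inner: "\<forall>a\<in>insert x V. \<forall>b\<in>V. a \<noteq> b \<longrightarrow> {a, b} \<notin> K \<longrightarrow>
      extensions_satisfy P (k - 1) (insert {a, b} K)"
    and outer: "extensions_satisfy P (k - 1) (insert {x, y} K)"
  shows "extensions_satisfy P k K"
proof (rule extensions_satisfy_step_fresh[OF inv \<open>0 < k\<close> \<open>P K\<close> K \<open>x \<notin> V\<close> inner])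
  show "\<And>a b. a \<notin> V \<Longrightarrow> b \<notin> V \<Longrightarrow> a \<noteq> b \<Longrightarrow> extensions_satisfy P (k - 1) (insert {a, b} K)"
    by (rule fresh_edge_relabel[OF relabeling_invariant_extensions_satisfy[OF inv] K fresh outer])
qed

lemma extensions_satisfy_step_last_vertex:
  assumes inv: "relabeling_invariant P" and "0 < k" "P K" and K: "\<Union>K \<subseteq> V"
    and last: "insert x V = UNIV" "x \<notin> V"
    and inner: "\<forall>a\<in>insert x V. \<forall>b\<in>V. a \<noteq> b \<longrightarrow> {a, b} \<notin> K \<longrightarrow>
      extensions_satisfy P (k - 1) (insert {a, b} K)"
  shows "extensions_satisfy P k K"
proof (rule extensions_satisfy_step_fresh[OF inv \<open>0 < k\<close> \<open>P K\<close> K \<open>x \<notin> V\<close> inner])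
  fix a b assume "a \<notin> V" "b \<notin> V" "a \<noteq> b"
  then show "extensions_satisfy P (k - 1) (insert {a, b} K)"
    using last(1) by (metis UNIV_I insertE)
qed

lemma exhaust_7: "(x::7) = 0 \<or> x = 1 \<or> x = 2 \<or> x = 3 \<or> x = 4 \<or> x = 5 \<or> x = 6"
proof (cases x)
  case (of_int z)
  then have "z = 0 \<or> z = 1 \<or> z = 2 \<or> z = 3 \<or> z = 4 \<or> z = 5 \<or> z = 6"
    by auto
  then show ?thesis
    using of_int by auto
qed

lemma UNIV_7: "(UNIV :: 7 set) = {0, 1, 2, 3, 4, 5, 6}"
  using exhaust_7 by auto

lemma forall_7: "(\<forall>i::7. P i) \<longleftrightarrow> P 0 \<and> P 1 \<and> P 2 \<and> P 3 \<and> P 4 \<and> P 5 \<and> P 6"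
proof
  assume "P 0 \<and> P 1 \<and> P 2 \<and> P 3 \<and> P 4 \<and> P 5 \<and> P 6"
  then show "\<forall>i. P i"
    using exhaust_7 by metis
qed blast

lemma sum_7: "sum f (UNIV :: 7 set) = f 0 + f 1 + f 2 + f 3 + f 4 + f 5 + f 6"
proof -
  have "sum f {0, 1, 2, 3, 4, 5, 6} = f 0 + f 1 + f 2 + f 3 + f 4 + f 5 + f 6"
    by (simp add: add.assoc)
  then show ?thesis
    unfolding UNIV_7 .
qed

definition tabulate7 :: "'a list \<Rightarrow> 7 \<Rightarrow> 'a" where
  "tabulate7 xs i = xs ! nat (Rep_bit1 i)"

lemma tabulate7_simps [simp]:
  "tabulate7 xs 0 = xs ! 0" "tabulate7 xs 1 = xs ! 1" "tabulate7 xs 2 = xs ! 2"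
  "tabulate7 xs 3 = xs ! 3" "tabulate7 xs 4 = xs ! 4" "tabulate7 xs 5 = xs ! 5"
  "tabulate7 xs 6 = xs ! 6"
  by (simp_all add: tabulate7_def bit1.Rep_0 bit1.Rep_1 bit1.Rep_numeral)

(* One graph from each isomorphism class with at most four edges; four disjoint edges
   would need eight vertices. *)
locale small_graph_representatives =
  fixes P :: "7 set set \<Rightarrow> bool"
  assumes invariant: "relabeling_invariant P"
    and empty: "P {}"
    and edge: "P {{0, 1}}"
    and path3: "P {{0, 1}, {0, 2}}"
    and two_edges: "P {{0, 1}, {2, 3}}"
    and claw: "P {{0, 1}, {0, 2}, {0, 3}}"
    and triangle: "P {{0, 1}, {0, 2}, {1, 2}}"
    and path4: "P {{0, 1}, {0, 2}, {1, 3}}"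
    and path3_edge: "P {{0, 1}, {0, 2}, {3, 4}}"
    and three_edges: "P {{0, 1}, {2, 3}, {4, 5}}"
    and star: "P {{0, 1}, {0, 2}, {0, 3}, {0, 4}}"
    and paw: "P {{0, 1}, {0, 2}, {0, 3}, {1, 2}}"
    and chair: "P {{0, 1}, {0, 2}, {0, 3}, {1, 4}}"
    and claw_edge: "P {{0, 1}, {0, 2}, {0, 3}, {4, 5}}"
    and triangle_edge: "P {{0, 1}, {0, 2}, {1, 2}, {3, 4}}"
    and cycle4: "P {{0, 1}, {0, 2}, {1, 3}, {2, 3}}"
    and path5: "P {{0, 1}, {0, 2}, {1, 3}, {2, 4}}"
    and path4_edge: "P {{0, 1}, {0, 2}, {1, 3}, {4, 5}}"
    and two_path3: "P {{0, 1}, {0, 2}, {3, 4}, {3, 5}}"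
    and path3_two_edges: "P {{0, 1}, {0, 2}, {3, 4}, {5, 6}}"
begin

lemma invariant_extensions: "relabeling_invariant (extensions_satisfy P k)"
  by (rule relabeling_invariant_extensions_satisfy[OF invariant])

lemma extensions_claw: "extensions_satisfy P 1 {{0, 1}, {0, 2}, {0, 3}}"
proof -
  note children =
    star paw chair claw_edge
    relabel_swaps[OF invariant paw, of "[(2, 3)]"]
    relabel_swaps[OF invariant paw, of "[(1, 3)]"]
    relabel_swaps[OF invariant chair, of "[(1, 2)]"]
    relabel_swaps[OF invariant chair, of "[(1, 3)]"]
  show ?thesis
    by (rule extensions_satisfy_step_fresh_pair[OF invariant _ claw,
        where V = "{0, 1, 2, 3}" and x = 4 and y = 5])
      (simp_all add: insert_commute children[simplified, simplified insert_commute])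
qed

lemma extensions_triangle: "extensions_satisfy P 1 {{0, 1}, {0, 2}, {1, 2}}"
proof -
  note children =
    paw triangle_edge
    relabel_swaps[OF invariant paw, of "[(0, 1)]"]
    relabel_swaps[OF invariant paw, of "[(0, 2)]"]
  show ?thesis
    by (rule extensions_satisfy_step_fresh_pair[OF invariant _ triangle,
        where V = "{0, 1, 2}" and x = 3 and y = 4])
      (simp_all add: insert_commute children[simplified, simplified insert_commute])
qed

lemma extensions_path4: "extensions_satisfy P 1 {{0, 1}, {0, 2}, {1, 3}}"
proof -
  note children =
    cycle4 path5 path4_edge
    relabel_swaps[OF invariant paw, of "[(2, 3)]"]
    relabel_swaps[OF invariant chair, of "[(3, 4)]"]
    relabel_swaps[OF invariant paw, of "[(0, 1)]"]
    relabel_swaps[OF invariant chair, of "[(2, 4), (0, 1)]"]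
    relabel_swaps[OF invariant path5, of "[(2, 3), (0, 1)]"]
  show ?thesis
    by (rule extensions_satisfy_step_fresh_pair[OF invariant _ path4,
        where V = "{0, 1, 2, 3}" and x = 4 and y = 5])
      (simp_all add: insert_commute children[simplified, simplified insert_commute])
qed

lemma extensions_path3_edge: "extensions_satisfy P 1 {{0, 1}, {0, 2}, {3, 4}}"
proof -
  note children =
    triangle_edge two_path3 path3_two_edges
    relabel_swaps[OF invariant chair, of "[(1, 3)]"]
    relabel_swaps[OF invariant chair, of "[(3, 4), (1, 3)]"]
    relabel_swaps[OF invariant claw_edge, of "[(3, 5)]"]
    relabel_swaps[OF invariant path5, of "[(2, 3), (0, 1)]"]
    relabel_swaps[OF invariant path5, of "[(2, 4), (0, 2), (0, 1)]"]
    relabel_swaps[OF invariant path4_edge, of "[(3, 5)]"]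
    relabel_swaps[OF invariant path5, of "[(1, 3), (1, 2), (0, 1)]"]
    relabel_swaps[OF invariant path5, of "[(1, 4), (0, 2)]"]
    relabel_swaps[OF invariant path4_edge, of "[(3, 5), (1, 2)]"]
    relabel_swaps[OF invariant two_path3, of "[(3, 4)]"]
  show ?thesis
    by (rule extensions_satisfy_step_fresh_pair[OF invariant _ path3_edge,
        where V = "{0, 1, 2, 3, 4}" and x = 5 and y = 6])
      (simp_all add: insert_commute children[simplified, simplified insert_commute])
qed

(* Here seven vertices leave no room for two fresh ones. *)
lemma extensions_three_edges: "extensions_satisfy P 1 {{0, 1}, {2, 3}, {4, 5}}"
proof -
  note children =
    relabel_swaps[OF invariant path4_edge, of "[(1, 2)]"]
    relabel_swaps[OF invariant path4_edge, of "[(1, 3), (0, 1)]"]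
    relabel_swaps[OF invariant path4_edge, of "[(3, 5), (2, 4), (1, 2)]"]
    relabel_swaps[OF invariant path4_edge, of "[(3, 4), (2, 5), (1, 2)]"]
    relabel_swaps[OF invariant path3_two_edges, of "[(4, 6), (2, 4)]"]
    relabel_swaps[OF invariant path4_edge, of "[(0, 2), (0, 1)]"]
    relabel_swaps[OF invariant path4_edge, of "[(0, 3)]"]
    relabel_swaps[OF invariant path4_edge, of "[(3, 4), (2, 5), (0, 3)]"]
    relabel_swaps[OF invariant path4_edge, of "[(3, 5), (2, 4), (0, 3)]"]
    relabel_swaps[OF invariant path3_two_edges, of "[(4, 6), (2, 4), (0, 1)]"]
    relabel_swaps[OF invariant path4_edge, of "[(1, 5), (1, 2), (0, 4)]"]
    relabel_swaps[OF invariant path4_edge, of "[(1, 4), (1, 2), (0, 5)]"]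
    relabel_swaps[OF invariant path3_two_edges, of "[(1, 6), (0, 5), (0, 3), (0, 2)]"]
    relabel_swaps[OF invariant path4_edge, of "[(1, 4), (0, 5), (0, 3)]"]
    relabel_swaps[OF invariant path4_edge, of "[(1, 5), (0, 4), (0, 3)]"]
    relabel_swaps[OF invariant path3_two_edges, of "[(1, 6), (0, 5), (0, 3)]"]
    relabel_swaps[OF invariant path3_two_edges, of "[(2, 4), (1, 6), (0, 5), (0, 2)]"]
    relabel_swaps[OF invariant path3_two_edges, of "[(2, 4), (1, 6), (0, 5)]"]
  show ?thesis
  proof (rule extensions_satisfy_step_last_vertex[OF invariant _ three_edges,
          where V = "{0, 1, 2, 3, 4, 5}" and x = 6])
    show "insert 6 {0, 1, 2, 3, 4, 5} = (UNIV :: 7 set)"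
      using exhaust_7 by auto
  qed (simp_all add: insert_commute children[simplified, simplified insert_commute])
qed

lemma extensions_path3: "extensions_satisfy P 2 {{0, 1}, {0, 2}}"
proof -
  note children =
    extensions_claw extensions_triangle extensions_path4 extensions_path3_edge
    relabel_swaps[OF invariant_extensions extensions_path4, of "[(1, 2)]"]
  show ?thesis
    by (rule extensions_satisfy_step_fresh_pair[OF invariant _ path3,
        where V = "{0, 1, 2}" and x = 3 and y = 4])
      (simp_all add: insert_commute children[simplified, simplified insert_commute])
qed

lemma extensions_two_edges: "extensions_satisfy P 2 {{0, 1}, {2, 3}}"
proof -
  note children =
    extensions_three_edges
    relabel_swaps[OF invariant_extensions extensions_path4, of "[(1, 2)]"]
    relabel_swaps[OF invariant_extensions extensions_path4, of "[(1, 3), (0, 1)]"]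
    relabel_swaps[OF invariant_extensions extensions_path3_edge, of "[(2, 4)]"]
    relabel_swaps[OF invariant_extensions extensions_path4, of "[(0, 2), (0, 1)]"]
    relabel_swaps[OF invariant_extensions extensions_path4, of "[(0, 3)]"]
    relabel_swaps[OF invariant_extensions extensions_path3_edge, of "[(2, 4), (0, 1)]"]
    relabel_swaps[OF invariant_extensions extensions_path3_edge, of "[(1, 4), (0, 3), (0, 2)]"]
    relabel_swaps[OF invariant_extensions extensions_path3_edge, of "[(1, 4), (0, 3)]"]
  show ?thesis
    by (rule extensions_satisfy_step_fresh_pair[OF invariant _ two_edges,
        where V = "{0, 1, 2, 3}" and x = 4 and y = 5])
      (simp_all add: insert_commute children[simplified, simplified insert_commute])
qed

lemma extensions_edge: "extensions_satisfy P 3 {{0, 1}}"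
proof -
  note children =
    extensions_path3 extensions_two_edges
    relabel_swaps[OF invariant_extensions extensions_path3, of "[(0, 1)]"]
  show ?thesis
    by (rule extensions_satisfy_step_fresh_pair[OF invariant _ edge,
        where V = "{0, 1}" and x = 2 and y = 3])
      (simp_all add: insert_commute children[simplified, simplified insert_commute])
qed

lemma extensions_empty: "extensions_satisfy P 4 {}"
  by (rule extensions_satisfy_step_fresh_pair[OF invariant _ empty,
        where V = "{}" and x = 0 and y = 1])
    (simp_all add: extensions_edge)

theorem holds_up_to_4_edges:
  assumes "H \<subseteq> simple_edges" "card H \<le> 4"
  shows "P H"
  using extensions_empty assms unfolding extensions_satisfy_def by simp

end

lemmas weighted_rows_simps = sum_7 forall_2 forall_3 sum_1 sum_2 sum_3 inner_vec_def

lemma realizable_empty: "two_eigenvalue_realizable ({} :: 7 set set)"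
  by (rule two_eigenvalue_realizable_of_weighted_rows[where c = 7 and i = 0 and j = 6 and
        w = "\<lambda>_. 1" and u = "\<lambda>_. vector [1] :: real^1"])
    (unfold forall_7, simp_all add: weighted_rows_simps)

lemma realizable_edge: "two_eigenvalue_realizable {{0::7, 1}}"
  by (rule two_eigenvalue_realizable_of_weighted_rows[where c = 91 and i = 0 and j = 6 and
        w = "tabulate7 [13, 5, 6, 4, 3, 3, 6]" and
        u = "tabulate7
          [vector [1, -2], vector [2, 1], vector [-1, 0], vector [-1, -1],
           vector [-2, 1], vector [2, -1], vector [-2, -2]] :: 7 \<Rightarrow> real^2"])
    (unfold forall_7, simp_all add: weighted_rows_simps doubleton_eq_iff)

lemma realizable_path3: "two_eigenvalue_realizable {{0::7, 1}, {0, 2}}"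
  by (rule two_eigenvalue_realizable_of_weighted_rows[where c = "107/2" and i = 0 and j = 6 and
        w = "tabulate7 [13/2, 6, 4, 13/8, 3, 1, 1]" and
        u = "tabulate7
          [vector [2, 1], vector [-1, 2], vector [-1, 2], vector [-2, 0],
           vector [1, 1], vector [-2, -2], vector [2, 0]] :: 7 \<Rightarrow> real^2"])
    (unfold forall_7, simp_all add: weighted_rows_simps doubleton_eq_iff)

lemma realizable_two_edges: "two_eigenvalue_realizable {{0::7, 1}, {2, 3}}"
  by (rule two_eigenvalue_realizable_of_weighted_rows[where c = 183 and i = 0 and j = 6 and
        w = "tabulate7 [110, 2, 26, 3, 5, 6, 6]" and
        u = "tabulate7
          [vector [1, 0], vector [0, 2], vector [1, 2], vector [-2, 1],
           vector [1, -2], vector [-1, 2], vector [2, -2]] :: 7 \<Rightarrow> real^2"])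
    (unfold forall_7, simp_all add: weighted_rows_simps doubleton_eq_iff)

lemma realizable_claw: "two_eigenvalue_realizable {{0::7, 1}, {0, 2}, {0, 3}}"
  by (rule two_eigenvalue_realizable_of_weighted_rows[where c = 54 and i = 0 and j = 6 and
        w = "tabulate7 [45, 2, 5, 2, 2, 1, 3]" and
        u = "tabulate7
          [vector [-1, 0], vector [0, 2], vector [0, 2], vector [0, -2],
           vector [-1, -1], vector [-2, -2], vector [-1, 2]] :: 7 \<Rightarrow> real^2"])
    (unfold forall_7, simp_all add: weighted_rows_simps doubleton_eq_iff)

lemma realizable_triangle: "two_eigenvalue_realizable {{0::7, 1}, {0, 2}, {1, 2}}"
  by (rule two_eigenvalue_realizable_of_weighted_rows[where c = 78 and i = 0 and j = 6 and
        w = "tabulate7 [19/3, 16/3, 2, 6, 5/2, 10/3, 5]" and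
        u = "tabulate7
          [vector [2, 1, 2], vector [-1, -2, 2], vector [2, -2, -1], vector [1, -2, 1],
           vector [2, 0, 0], vector [-1, -2, -1], vector [-2, 1, 2]] :: 7 \<Rightarrow> real^3"])
    (unfold forall_7, simp_all add: weighted_rows_simps doubleton_eq_iff)

lemma realizable_path4: "two_eigenvalue_realizable {{0::7, 1}, {0, 2}, {1, 3}}"
  by (rule two_eigenvalue_realizable_of_weighted_rows[where c = "473/5" and i = 0 and j = 6 and
        w = "tabulate7 [69/5, 47/5, 26/3, 1/5, 38/15, 2, 4]" and
        u = "tabulate7
          [vector [1, 0, -2], vector [2, 2, 1], vector [2, -2, 1], vector [0, -1, 2],
           vector [-1, -2, 1], vector [-1, 2, -1], vector [-1, 1, 2]] :: 7 \<Rightarrow> real^3"])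
    (unfold forall_7, simp_all add: weighted_rows_simps doubleton_eq_iff)

lemma realizable_path3_edge: "two_eigenvalue_realizable {{0::7, 1}, {0, 2}, {3, 4}}"
  by (rule two_eigenvalue_realizable_of_weighted_rows[where c = 51 and i = 0 and j = 6 and
        w = "tabulate7 [5, 3, 2, 18, 2, 2, 3]" and
        u = "tabulate7
          [vector [0, 1], vector [-2, 0], vector [2, 0], vector [1, -1],
           vector [2, 2], vector [-1, -2], vector [-1, -2]] :: 7 \<Rightarrow> real^2"])
    (unfold forall_7, simp_all add: weighted_rows_simps doubleton_eq_iff)

lemma realizable_three_edges: "two_eigenvalue_realizable {{0::7, 1}, {2, 3}, {4, 5}}"
  by (rule two_eigenvalue_realizable_of_weighted_rows[where c = 88 and i = 0 and j = 6 and
        w = "tabulate7 [9/4, 3, 9, 4, 5, 1, 6]" and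
        u = "tabulate7
          [vector [-2, 0], vector [0, 1], vector [2, 2], vector [2, -2],
           vector [-2, 1], vector [1, 2], vector [-1, 2]] :: 7 \<Rightarrow> real^2"])
    (unfold forall_7, simp_all add: weighted_rows_simps doubleton_eq_iff)

lemma realizable_star: "two_eigenvalue_realizable {{0::7, 1}, {0, 2}, {0, 3}, {0, 4}}"
  by (rule two_eigenvalue_realizable_of_weighted_rows[where c = 74 and i = 0 and j = 6 and
        w = "tabulate7 [29/2, 1, 3, 6, 3, 9/2, 3]" and
        u = "tabulate7
          [vector [1, 2], vector [2, -1], vector [2, -1], vector [-2, 1],
           vector [-2, 1], vector [-1, 0], vector [-1, 1]] :: 7 \<Rightarrow> real^2"])
    (unfold forall_7, simp_all add: weighted_rows_simps doubleton_eq_iff)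

lemma realizable_paw: "two_eigenvalue_realizable {{0::7, 1}, {0, 2}, {0, 3}, {1, 2}}"
  by (rule two_eigenvalue_realizable_of_weighted_rows[where c = 12 and i = 0 and j = 6 and
        w = "tabulate7 [5/3, 1/12, 1, 1/2, 1/2, 3/4, 1]" and
        u = "tabulate7
          [vector [1, -2, 1], vector [2, 2, 2], vector [-2, 0, 2], vector [0, 1, 2],
           vector [-2, 1, 0], vector [2, 2, 0], vector [-1, -1, -2]] :: 7 \<Rightarrow> real^3"])
    (unfold forall_7, simp_all add: weighted_rows_simps doubleton_eq_iff)

lemma realizable_chair: "two_eigenvalue_realizable {{0::7, 1}, {0, 2}, {0, 3}, {1, 4}}"
  by (rule two_eigenvalue_realizable_of_weighted_rows[where c = "185/4" and i = 0 and j = 6 and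
        w = "tabulate7 [155/32, 125/8, 1/4, 4, 5/4, 5, 5]" and
        u = "tabulate7
          [vector [0, -2, 2], vector [0, 1, 1], vector [-1, -2, -2], vector [2, -1, -1],
           vector [-2, 1, -1], vector [2, 1, 0], vector [-1, 0, -1]] :: 7 \<Rightarrow> real^3"])
    (unfold forall_7, simp_all add: weighted_rows_simps doubleton_eq_iff)

lemma realizable_claw_edge: "two_eigenvalue_realizable {{0::7, 1}, {0, 2}, {0, 3}, {4, 5}}"
  by (rule two_eigenvalue_realizable_of_weighted_rows[where c = 29 and i = 0 and j = 6 and
        w = "tabulate7 [5, 2, 5, 4, 3/4, 5, 1]" and
        u = "tabulate7
          [vector [-2, 0], vector [0, 2], vector [0, -1], vector [0, -1],
           vector [2, -2], vector [1, 1], vector [-1, 2]] :: 7 \<Rightarrow> real^2"])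
    (unfold forall_7, simp_all add: weighted_rows_simps doubleton_eq_iff)

lemma realizable_triangle_edge: "two_eigenvalue_realizable {{0::7, 1}, {0, 2}, {1, 2}, {3, 4}}"
  by (rule two_eigenvalue_realizable_of_weighted_rows[where c = 49 and i = 0 and j = 6 and
        w = "tabulate7 [13/4, 22, 1, 4, 11/4, 9/4, 3]" and
        u = "tabulate7
          [vector [-2, 0, 0], vector [0, 1, 0], vector [0, 0, -1], vector [1, 1, -2],
           vector [-2, -2, -2], vector [2, -2, 2], vector [-2, 1, 2]] :: 7 \<Rightarrow> real^3"])
    (unfold forall_7, simp_all add: weighted_rows_simps doubleton_eq_iff)

lemma realizable_cycle4: "two_eigenvalue_realizable {{0::7, 1}, {0, 2}, {1, 3}, {2, 3}}"
  by (rule two_eigenvalue_realizable_of_weighted_rows[where c = "140/3" and i = 0 and j = 6 and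
        w = "tabulate7 [46/3, 2, 5, 4, 1/3, 1, 1]" and
        u = "tabulate7
          [vector [-1, 1], vector [1, 1], vector [-2, -2], vector [-1, 1],
           vector [1, -2], vector [1, -2], vector [2, 0]] :: 7 \<Rightarrow> real^2"])
    (unfold forall_7, simp_all add: weighted_rows_simps doubleton_eq_iff)

lemma realizable_path5: "two_eigenvalue_realizable {{0::7, 1}, {0, 2}, {1, 3}, {2, 4}}"
  by (rule two_eigenvalue_realizable_of_weighted_rows[where c = 124 and i = 0 and j = 6 and
        w = "tabulate7 [23/2, 10, 8, 9, 7/2, 6, 1]" and
        u = "tabulate7
          [vector [1, -2, -2], vector [-2, -2, 1], vector [-2, 0, -1], vector [-1, 0, -2],
           vector [-1, -2, 2], vector [-2, 2, -1], vector [2, 0, 2]] :: 7 \<Rightarrow> real^3"])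
    (unfold forall_7, simp_all add: weighted_rows_simps doubleton_eq_iff)

lemma realizable_path4_edge: "two_eigenvalue_realizable {{0::7, 1}, {0, 2}, {1, 3}, {4, 5}}"
  by (rule two_eigenvalue_realizable_of_weighted_rows[where c = "47/2" and i = 0 and j = 6 and
        w = "tabulate7 [29/12, 23/2, 1/4, 11/6, 3/2, 4, 1]" and
        u = "tabulate7
          [vector [-2, 2, 0], vector [0, 0, -1], vector [2, 2, -2], vector [1, 2, 0],
           vector [2, 1, 2], vector [-1, 0, 1], vector [-1, -2, 1]] :: 7 \<Rightarrow> real^3"])
    (unfold forall_7, simp_all add: weighted_rows_simps doubleton_eq_iff)

lemma realizable_two_path3: "two_eigenvalue_realizable {{0::7, 1}, {0, 2}, {3, 4}, {3, 5}}"
  by (rule two_eigenvalue_realizable_of_weighted_rows[where c = "160/3" and i = 0 and j = 6 and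
        w = "tabulate7 [20/3, 5, 1, 29/12, 3, 2, 2]" and
        u = "tabulate7
          [vector [2, 1], vector [-1, 2], vector [1, -2], vector [2, 2],
           vector [1, -1], vector [2, -2], vector [0, -1]] :: 7 \<Rightarrow> real^2"])
    (unfold forall_7, simp_all add: weighted_rows_simps doubleton_eq_iff)

lemma realizable_path3_two_edges: "two_eigenvalue_realizable {{0::7, 1}, {0, 2}, {3, 4}, {5, 6}}"
  by (rule two_eigenvalue_realizable_of_weighted_rows[where c = 24 and i = 0 and j = 6 and
        w = "tabulate7 [4, 5, 1, 5, 2, 2, 1]" and
        u = "tabulate7
          [vector [-1, 1], vector [1, 1], vector [-1, -1], vector [0, -1],
           vector [2, 0], vector [-1, 2], vector [-2, -1]] :: 7 \<Rightarrow> real^2"])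
    (unfold forall_7, simp_all add: weighted_rows_simps doubleton_eq_iff)

lemma small_graph_representatives_two_eigenvalue_realizable:
  "small_graph_representatives two_eigenvalue_realizable"
  by (unfold_locales; fact relabeling_invariant_two_eigenvalue_realizable realizable_empty
      realizable_edge realizable_path3 realizable_two_edges realizable_claw realizable_triangle
      realizable_path4 realizable_path3_edge realizable_three_edges realizable_star realizable_paw
      realizable_chair realizable_claw_edge realizable_triangle_edge realizable_cycle4
      realizable_path5 realizable_path4_edge realizable_two_path3 realizable_path3_two_edges)

theorem mainTheorem18:
  fixes H :: "(7 set) set"
  assumes "H \<subseteq> simple_edges"
    and "card H \<le> 4"
  shows "q_graph (complete_minus H) = 2"
proof -
  have "two_eigenvalue_realizable H"
    by (rule small_graph_representatives.holds_up_to_4_edges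
        [OF small_graph_representatives_two_eigenvalue_realizable assms])
  then obtain A where "A \<in> S_graph (complete_minus H)" "card (eigenvalues A) = 2"
    unfolding two_eigenvalue_realizable_def by blast
  moreover obtain j :: 7 where "j \<noteq> 0" "{0, j} \<notin> H"
    using exists_non_neighbour[of H 0] assms(2) by auto
  ultimately show ?thesis
    by (intro q_graph_eq_2I[of 0 j]) (auto simp: complete_minus_def)
qed

end
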